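(* Let $\mathcal{S}=\langle\mathcal{L},\vdash\rangle$ be a logical structure with $\mathcal{L}$ infinite, and let $\varrho\subseteq\mathcal{P}(\mathcal{L})\times\mathcal{L}$ have finite reach. Then for every finite $\Gamma\subseteq\mathcal{L}$ there exists $\beta\in\mathcal{L}$ such that $\Gamma\not\vdash^\varrho\beta$. The same holds with $\vdash^{p\varrho}$ in place of $\vdash^\varrho$.
   Context: A logical structure is a pair $\langle\mathcal{L},\vdash\rangle$ with $\mathcal{L}$ a set and $\vdash\subseteq\mathcal{P}(\mathcal{L})\times\mathcal{L}$ arbitrary. For $\varrho\subseteq\mathcal{P}(\mathcal{L})\times\mathcal{L}$: $\Gamma\vdash^\varrho\alpha$ iff there is $\Delta\subseteq\Gamma$ with $(\Delta,\alpha)\in\varrho$ and $\Delta\vdash\alpha$; $\Gamma\vdash^{p\varrho}\alpha$ iff there is a nonempty $\Delta\subseteq\Gamma$ with $(\Delta,\alpha)\in\varrho$ and $\Delta\vdash\alpha$. A relation $\varrho\subseteq A\times B$ has finite reach if for every $a\in A$ the set $\{b\in B\mid (a,b)\in\varrho\}$ is finite. *)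

theory Defs
  imports Main
begin

text \<open>A logical structure over the language given by the type 'a: the consequence
relation is an arbitrary relation between sets of formulas and formulas.\<close>

definition finite_reach :: "('a \<times> 'b) set \<Rightarrow> bool" where
  "finite_reach \<rho> \<longleftrightarrow> (\<forall>a. finite {b. (a, b) \<in> \<rho>})"

definition rho_cons :: "('f set \<times> 'f) set \<Rightarrow> ('f set \<times> 'f) set \<Rightarrow> 'f set \<Rightarrow> 'f \<Rightarrow> bool" where
  "rho_cons vdash \<rho> \<Gamma> \<alpha> \<longleftrightarrow> (\<exists>\<Delta>. \<Delta> \<subseteq> \<Gamma> \<and> (\<Delta>, \<alpha>) \<in> \<rho> \<and> (\<Delta>, \<alpha>) \<in> vdash)"

definition prho_cons :: "('f set \<times> 'f) set \<Rightarrow> ('f set \<times> 'f) set \<Rightarrow> 'f set \<Rightarrow> 'f \<Rightarrow> bool" where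
  "prho_cons vdash \<rho> \<Gamma> \<alpha> \<longleftrightarrow> (\<exists>\<Delta>. \<Delta> \<subseteq> \<Gamma> \<and> \<Delta> \<noteq> {} \<and> (\<Delta>, \<alpha>) \<in> \<rho> \<and> (\<Delta>, \<alpha>) \<in> vdash)"

end

theory Submission
  imports Defs
begin

text \<open>Every \<open>\<beta>\<close> with \<open>\<Gamma> \<turnstile>\<^sup>\<rho> \<beta>\<close> is related by \<open>\<rho>\<close> to some subset of \<open>\<Gamma>\<close>. A finite \<open>\<Gamma>\<close> has
  finitely many subsets, each of finite reach, so only finitely many \<open>\<beta>\<close> qualify, and an
  infinite language contains one that does not; \<open>\<turnstile>\<^sup>p\<^sup>\<rho>\<close> is stronger than \<open>\<turnstile>\<^sup>\<rho>\<close>.\<close>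

lemma finite_reach_finite_Image:
  assumes "finite_reach \<rho>" and "finite A"
  shows "finite (\<rho> `` A)"
proof -
  have "\<rho> `` A = (\<Union>a\<in>A. {b. (a, b) \<in> \<rho>})"
    by blast
  then show ?thesis
    using assms unfolding finite_reach_def by simp
qed

lemma rho_cons_in_Image_Pow:
  assumes "rho_cons vdash \<rho> \<Gamma> \<beta>"
  shows "\<beta> \<in> \<rho> `` Pow \<Gamma>"
  using assms unfolding rho_cons_def by blast

lemma prho_cons_imp_rho_cons:
  assumes "prho_cons vdash \<rho> \<Gamma> \<beta>"
  shows "rho_cons vdash \<rho> \<Gamma> \<beta>"
  using assms unfolding rho_cons_def prho_cons_def by blast

lemma ex_not_rho_cons:
  assumes "infinite (UNIV :: 'f set)" and "finite_reach \<rho>" and "finite (\<Gamma> :: 'f set)"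
  shows "\<exists>\<beta>. \<not> rho_cons vdash \<rho> \<Gamma> \<beta>"
proof -
  have "finite (\<rho> `` Pow \<Gamma>)"
    using assms(2,3) by (simp add: finite_reach_finite_Image)
  then obtain \<beta> where "\<beta> \<notin> \<rho> `` Pow \<Gamma>"
    using ex_new_if_finite[OF assms(1)] by blast
  then show ?thesis
    using rho_cons_in_Image_Pow by metis
qed

theorem theorem3p15:
  fixes vdash :: "('f set \<times> 'f) set" and \<rho> :: "('f set \<times> 'f) set"
  assumes "infinite (UNIV :: 'f set)"
    and "finite_reach \<rho>"
  shows "(\<forall>\<Gamma>::'f set. finite \<Gamma> \<longrightarrow> (\<exists>\<beta>. \<not> rho_cons vdash \<rho> \<Gamma> \<beta>))
    \<and> (\<forall>\<Gamma>::'f set. finite \<Gamma> \<longrightarrow> (\<exists>\<beta>. \<not> prho_cons vdash \<rho> \<Gamma> \<beta>))"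
  using ex_not_rho_cons[OF assms] prho_cons_imp_rho_cons by metis

end
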